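(* Let $1\le k\le d$ and $\alpha\ge1$. Let $P_1,\dots,P_m\subset\mathbb{R}^d$ be an arbitrary collection of finite point sets, and for each $i$ let $c(P_i)\subseteq P_i$ be an $\alpha$-approximate core-set for the $k$-directional height of $P_i$. Then $$\mathrm{MAXDET}_k\Big(\bigcup_{i=1}^m P_i\Big)\le \alpha^{2k}\cdot\mathrm{MAXDET}_k\Big(\bigcup_{i=1}^m c(P_i)\Big).$$
   Context: For a finite set $S\subset\mathbb{R}^d$ with $|S|=k$, let $M_S$ be the $k\times d$ matrix whose rows are the points of $S$. For finite $P\subset\mathbb{R}^d$, $\mathrm{MAXDET}_k(P)=\max_{S\subseteq P,\,|S|=k}\det(M_SM_S^\top)$. Let $\mathcal{H}_{k-1}$ be the set of all $(k-1)$-dimensional linear subspaces of $\mathbb{R}^d$, and $\mathrm{dist}(p,\mathcal{H})$ the Euclidean distance from point $p$ to subspace $\mathcal{H}$. The $k$-directional height of a point set $P$ with respect to $\mathcal{H}\in\mathcal{H}_{k-1}$ is $h(P,\mathcal{H})=\max_{p\in P}\mathrm{dist}(p,\mathcal{H})$. A subset $C\subseteq P$ is an $\alpha$-approximate core-set for the $k$-directional height of $P$ if $h(C,\mathcal{H})\ge h(P,\mathcal{H})/\alpha$ for every $\mathcal{H}\in\mathcal{H}_{k-1}$. *)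

theory Defs
  imports "HOL-Analysis.Analysis" "Jordan_Normal_Form.Determinant"
begin

text \<open>Points of R^d are elements of a Euclidean space 'a with DIM('a) = d.
  For a list xs of k points (the rows of M_S), M_S M_S^T is the k x k Gram matrix
  with entries xs!i \<bullet> xs!j.\<close>

definition gram_mat :: "'a::euclidean_space list \<Rightarrow> real mat" where
  "gram_mat xs = mat (length xs) (length xs) (\<lambda>(i,j). (xs ! i) \<bullet> (xs ! j))"

text \<open>MAXDET_k(P): maximum over k-element subsets S of P (listed in some order, which
  does not affect the determinant) of det(M_S M_S^T); 0 by convention if P has fewer
  than k points.\<close>

definition maxdet :: "nat \<Rightarrow> 'a::euclidean_space set \<Rightarrow> real" where
  "maxdet k P =
     (let D = {det (gram_mat xs) | xs. distinct xs \<and> set xs \<subseteq> P \<and> length xs = k}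
      in if D = {} then 0 else Max D)"

definition subspaces_of_dim :: "nat \<Rightarrow> 'a::euclidean_space set set" where
  "subspaces_of_dim n = {H. subspace H \<and> dim H = n}"

definition height :: "'a::euclidean_space set \<Rightarrow> 'a set \<Rightarrow> real" where
  "height P H = (if P = {} then 0 else Max ((\<lambda>p. infdist p H) ` P))"

definition approx_coreset ::
  "real \<Rightarrow> nat \<Rightarrow> 'a::euclidean_space set \<Rightarrow> 'a set \<Rightarrow> bool" where
  "approx_coreset \<alpha> k C P \<longleftrightarrow>
     C \<subseteq> P \<and> (\<forall>H \<in> subspaces_of_dim (k - 1). height C H \<ge> height P H / \<alpha>)"

end

theory Submission
  imports Defs
begin

(*
  The Gram determinant of k points is "base times height squared": replacing the j-th point
  by q multiplies the Gram determinant of the other points by the squared distance of q to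
  their span H.  Take k points of the union of the P_i realising the maximum.  If their Gram
  determinant is positive, H is a (k-1)-dimensional subspace, so the core-set property gives
  a point q of the relevant core-set whose distance to H is at least 1/alpha times that of
  the j-th point; exchanging the two loses at most a factor alpha^2.  Exchanging the k
  points one after another yields k points of the union of the core-sets whose Gram
  determinant is at least alpha^(-2k) times the maximum.
*)

definition remove_nth :: "nat \<Rightarrow> 'a list \<Rightarrow> 'a list" where
  "remove_nth j xs = take j xs @ drop (Suc j) xs"

lemma length_remove_nth: "j < length xs \<Longrightarrow> length (remove_nth j xs) = length xs - 1"
  unfolding remove_nth_def by simp

lemma nth_remove_nth:
  "j < length xs \<Longrightarrow> i < length xs - 1 \<Longrightarrow> remove_nth j xs ! i = xs ! (if i < j then i else Suc i)"
  unfolding remove_nth_def by (auto simp: nth_append min_def)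

lemma remove_nth_snoc [simp]: "remove_nth (length xs) (xs @ [x]) = xs"
  unfolding remove_nth_def by simp

lemma set_drop_eq_image_nth: "set (drop n xs) = (!) xs ` {n..<length xs}"
proof -
  have "drop n xs = map ((!) xs) [n..<length xs]"
    by (metis drop_map drop_upt map_nth add_0)
  then show ?thesis by simp
qed

lemma set_remove_nth:
  assumes "j < length xs"
  shows "set (remove_nth j xs) = (!) xs ` ({..<length xs} - {j})"
proof -
  have "{..<length xs} - {j} = {..<j} \<union> {Suc j..<length xs}" using assms by auto
  then show ?thesis
    using assms unfolding remove_nth_def
    by (simp add: set_drop_eq_image_nth nth_image[symmetric] lessThan_atLeast0 image_Un)
qed

lemma gram_mat_carrier: "gram_mat xs \<in> carrier_mat (length xs) (length xs)"
  unfolding gram_mat_def by simp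

lemma dim_gram_mat [simp]:
  "dim_row (gram_mat xs) = length xs" "dim_col (gram_mat xs) = length xs"
  unfolding gram_mat_def by simp_all

lemma index_gram_mat [simp]:
  "i < length xs \<Longrightarrow> j < length xs \<Longrightarrow> gram_mat xs $$ (i, j) = xs ! i \<bullet> xs ! j"
  unfolding gram_mat_def by simp

lemma det_gram_mat_Nil [simp]: "det (gram_mat []) = 1"
  unfolding gram_mat_def by (simp add: det_def)

lemma det_gram_mat_update_add_scaleR:
  assumes j: "j < length xs" and l: "l < length xs" "l \<noteq> j"
  shows "det (gram_mat (xs[j := q + c *\<^sub>R xs ! l])) = det (gram_mat (xs[j := q]))"
proof -
  let ?G = "gram_mat (xs[j := q])"
  have G: "?G \<in> carrier_mat (length xs) (length xs)"
    using gram_mat_carrier[of "xs[j := q]"] by simp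
  then have G': "addrow c j l ?G \<in> carrier_mat (length xs) (length xs)"
    by simp
  have "gram_mat (xs[j := q + c *\<^sub>R xs ! l]) = addcol c j l (addrow c j l ?G)"
    using j l by (intro eq_matI) (auto simp: nth_list_update inner_add_left inner_add_right)
  also have "det \<dots> = det ?G"
    using det_addcol[OF l(1) _ G'] det_addrow[OF l(1) _ G] l(2) by simp
  finally show ?thesis .
qed

lemma det_gram_mat_update_add_span:
  assumes j: "j < length xs" and h: "h \<in> span (set (remove_nth j xs))"
  shows "det (gram_mat (xs[j := q + h])) = det (gram_mat (xs[j := q]))"
  using h
proof (induction arbitrary: q rule: span_induct_alt)
  case base
  then show ?case by simp
next
  case (step c x y)
  obtain l where l: "l < length xs" "l \<noteq> j" "x = xs ! l"
    using step.hyps j by (auto simp: set_remove_nth)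
  have "det (gram_mat (xs[j := q + (c *\<^sub>R x + y)]))
      = det (gram_mat (xs[j := (q + y) + c *\<^sub>R xs ! l]))"
    using l by (simp add: algebra_simps)
  also have "\<dots> = det (gram_mat (xs[j := q + y]))"
    by (rule det_gram_mat_update_add_scaleR[OF j l(1,2)])
  also have "\<dots> = det (gram_mat (xs[j := q]))"
    by (rule step.IH)
  finally show ?case .
qed

lemma det_gram_mat_update_orthogonal:
  fixes xs :: "'a::euclidean_space list"
  assumes j: "j < length xs" and r: "\<And>x. x \<in> set (remove_nth j xs) \<Longrightarrow> r \<bullet> x = 0"
  shows "det (gram_mat (xs[j := r])) = (r \<bullet> r) * det (gram_mat (remove_nth j xs))"
proof -
  let ?A = "gram_mat (xs[j := r])"
  have A: "?A \<in> carrier_mat (length xs) (length xs)"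
    using gram_mat_carrier[of "xs[j := r]"] by simp
  have column_zero: "?A $$ (i, j) = 0" if "i < length xs" "i \<noteq> j" for i
    using that j r[of "xs ! i"] by (auto simp: set_remove_nth inner_commute)
  have "det ?A = (\<Sum>i<length xs. ?A $$ (i, j) * cofactor ?A i j)"
    by (rule laplace_expansion_column[OF A j])
  also have "\<dots> = ?A $$ (j, j) * cofactor ?A j j"
    using j column_zero by (subst sum.remove[of _ j]) auto
  also have "mat_delete ?A j j = gram_mat (remove_nth j xs)"
    using j by (intro eq_matI) (auto simp: mat_delete_def length_remove_nth nth_remove_nth)
  then have "cofactor ?A j j = det (gram_mat (remove_nth j xs))"
    by (simp add: cofactor_def)
  finally show ?thesis
    using j by simp
qed

lemma infdist_span_add_orthogonal:
  fixes h r :: "'a::euclidean_space"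
  assumes h: "h \<in> span S" and r: "\<And>w. w \<in> span S \<Longrightarrow> r \<bullet> w = 0"
  shows "infdist (h + r) (span S) = norm r"
proof (rule antisym)
  show "infdist (h + r) (span S) \<le> norm r"
    using infdist_le[OF h, of "h + r"] by (simp add: dist_norm)
next
  have ne: "span S \<noteq> {}"
    using span_zero by blast
  show "norm r \<le> infdist (h + r) (span S)"
    unfolding infdist_notempty[OF ne]
  proof (rule cINF_greatest[OF ne])
    fix a assume a: "a \<in> span S"
    have "r \<bullet> (h - a) = 0"
      using r[OF span_diff[OF h a]] .
    then have "(norm (h + r - a))\<^sup>2 = (norm r)\<^sup>2 + (norm (h - a))\<^sup>2"
      by (simp add: power2_norm_eq_inner algebra_simps inner_commute)
    then have "(norm r)\<^sup>2 \<le> (norm (h + r - a))\<^sup>2"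
      by simp
    then show "norm r \<le> dist (h + r) a"
      unfolding dist_norm by (rule power2_le_imp_le) simp
  qed
qed

lemma det_gram_mat_update:
  fixes xs :: "'a::euclidean_space list"
  assumes j: "j < length xs"
  shows "det (gram_mat (xs[j := q]))
    = (infdist q (span (set (remove_nth j xs))))\<^sup>2 * det (gram_mat (remove_nth j xs))"
proof -
  let ?H = "span (set (remove_nth j xs))"
  obtain h r where h: "h \<in> ?H" and r: "\<And>w. w \<in> ?H \<Longrightarrow> r \<bullet> w = 0" and q: "q = h + r"
    using orthogonal_subspace_decomp_exists[of "set (remove_nth j xs)" q]
    unfolding Linear_Algebra.orthogonal_def by blast
  have "det (gram_mat (xs[j := q])) = det (gram_mat (xs[j := r + h]))"
    using q by (simp add: add.commute)
  also have "\<dots> = det (gram_mat (xs[j := r]))"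
    by (rule det_gram_mat_update_add_span[OF j h])
  also have "\<dots> = (r \<bullet> r) * det (gram_mat (remove_nth j xs))"
    using j r span_base by (intro det_gram_mat_update_orthogonal) auto
  also have "r \<bullet> r = (infdist q ?H)\<^sup>2"
    using infdist_span_add_orthogonal[OF h r] q by (simp add: power2_norm_eq_inner)
  finally show ?thesis .
qed

lemma det_gram_mat_snoc:
  fixes xs :: "'a::euclidean_space list"
  shows "det (gram_mat (xs @ [q])) = (infdist q (span (set xs)))\<^sup>2 * det (gram_mat xs)"
  using det_gram_mat_update[of "length xs" "xs @ [q]" q] by simp

lemma det_gram_mat_nonneg: "0 \<le> det (gram_mat xs)"
  by (induction xs rule: rev_induct) (simp_all add: det_gram_mat_snoc)

lemma det_gram_mat_nonzero_imp_distinct_independent: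
  fixes xs :: "'a::euclidean_space list"
  shows "det (gram_mat xs) \<noteq> 0 \<Longrightarrow> distinct xs \<and> independent (set xs)"
proof (induction xs rule: rev_induct)
  case (snoc x xs)
  have "infdist x (span (set xs)) \<noteq> 0" "det (gram_mat xs) \<noteq> 0"
    using snoc.prems by (auto simp: det_gram_mat_snoc)
  then have "x \<notin> span (set xs)" "distinct xs" "independent (set xs)"
    using snoc.IH by auto
  with span_base show ?case
    by (auto simp: independent_insert)
qed (simp add: independent_empty)

lemma finite_gram_dets:
  assumes "finite P"
  shows "finite {det (gram_mat xs) | xs. distinct xs \<and> set xs \<subseteq> P \<and> length xs = k}"
proof -
  have "{det (gram_mat xs) | xs. distinct xs \<and> set xs \<subseteq> P \<and> length xs = k}
      \<subseteq> (\<lambda>xs. det (gram_mat xs)) ` {xs. set xs \<subseteq> P \<and> length xs = k}"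
    by auto
  then show ?thesis
    by (rule finite_surj[OF finite_lists_length_eq[OF assms]])
qed

lemma maxdet_ge:
  assumes "finite P" "distinct xs" "set xs \<subseteq> P" "length xs = k"
  shows "det (gram_mat xs) \<le> maxdet k P"
proof -
  let ?D = "{det (gram_mat xs) | xs. distinct xs \<and> set xs \<subseteq> P \<and> length xs = k}"
  have "det (gram_mat xs) \<in> ?D"
    using assms(2-4) by blast
  moreover from this have "?D \<noteq> {}"
    by blast
  then have "maxdet k P = Max ?D"
    unfolding maxdet_def Let_def by (rule if_not_P)
  ultimately show ?thesis
    using Max_ge[OF finite_gram_dets[OF assms(1)]] by simp
qed

lemma maxdet_attained:
  assumes "finite P" "maxdet k P \<noteq> 0"
  obtains xs where "distinct xs" "set xs \<subseteq> P" "length xs = k" "maxdet k P = det (gram_mat xs)"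
proof -
  let ?D = "{det (gram_mat xs) | xs. distinct xs \<and> set xs \<subseteq> P \<and> length xs = k}"
  have "?D \<noteq> {}"
  proof
    assume "?D = {}"
    then have "maxdet k P = 0"
      unfolding maxdet_def Let_def by (rule if_P)
    with assms(2) show False by simp
  qed
  then have "maxdet k P = Max ?D"
    unfolding maxdet_def Let_def by (rule if_not_P)
  moreover have "Max ?D \<in> ?D"
    using finite_gram_dets[OF assms(1)] \<open>?D \<noteq> {}\<close> by (rule Max_in)
  ultimately show ?thesis
    using that by auto
qed

lemma maxdet_nonneg:
  fixes P :: "'a::euclidean_space set"
  assumes "finite P"
  shows "0 \<le> maxdet k P"
proof (cases "maxdet k P = 0")
  case False
  then obtain xs where "distinct xs" "set xs \<subseteq> P" "length xs = k" "maxdet k P = det (gram_mat xs)"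
    by (rule maxdet_attained[OF assms])
  then show ?thesis
    using det_gram_mat_nonneg by simp
qed simp

lemma infdist_le_height: "finite P \<Longrightarrow> p \<in> P \<Longrightarrow> infdist p H \<le> height P H"
  unfolding height_def by auto

lemma height_attained:
  assumes "finite C" "C \<noteq> {}"
  obtains q where "q \<in> C" "height C H = infdist q H"
proof -
  have "height C H \<in> (\<lambda>p. infdist p H) ` C"
    unfolding height_def using assms by (auto intro!: Max_in)
  then show ?thesis
    using that by auto
qed

lemma approx_coreset_farther_point:
  assumes coreset: "approx_coreset \<alpha> k C P" and "finite P" "0 < \<alpha>"
    and "p \<in> P" "H \<in> subspaces_of_dim (k - 1)" "0 < infdist p H"
  obtains q where "q \<in> C" "infdist p H \<le> \<alpha> * infdist q H"
proof -
  have "infdist p H \<le> height P H"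
    using assms by (intro infdist_le_height)
  also have "\<dots> \<le> \<alpha> * height C H"
    using coreset assms(3,5) unfolding approx_coreset_def by (auto simp: divide_le_eq mult.commute)
  finally have le: "infdist p H \<le> \<alpha> * height C H" .
  have "finite C"
    using coreset \<open>finite P\<close> finite_subset unfolding approx_coreset_def by blast
  moreover have "C \<noteq> {}"
    using le assms(6) by (auto simp: height_def)
  ultimately obtain q where "q \<in> C" "height C H = infdist q H"
    by (rule height_attained)
  with le show ?thesis
    using that by simp
qed

lemma det_gram_mat_exchange:
  fixes xs :: "'a::euclidean_space list"
  assumes coreset: "approx_coreset \<alpha> k C P" and "finite P" "0 < \<alpha>"
    and xs: "length xs = k" "j < k" "xs ! j \<in> P" and pos: "0 < det (gram_mat xs)"
  obtains q where "q \<in> C" "det (gram_mat xs) \<le> \<alpha>\<^sup>2 * det (gram_mat (xs[j := q]))"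
proof -
  let ?ys = "remove_nth j xs"
  let ?H = "span (set ?ys)"
  have j: "j < length xs"
    using xs by simp
  have base_times_height: "det (gram_mat (xs[j := p])) = (infdist p ?H)\<^sup>2 * det (gram_mat ?ys)" for p
    by (rule det_gram_mat_update[OF j])
  from pos base_times_height[of "xs ! j"] have far: "0 < infdist (xs ! j) ?H" and "det (gram_mat ?ys) \<noteq> 0"
    using infdist_nonneg[of "xs ! j" ?H] by (auto simp: less_le)
  from this(2) have "distinct ?ys" "independent (set ?ys)"
    using det_gram_mat_nonzero_imp_distinct_independent by blast+
  then have "dim ?H = k - 1"
    using xs by (simp add: dim_eq_card_independent distinct_card length_remove_nth)
  then have H: "?H \<in> subspaces_of_dim (k - 1)"
    unfolding subspaces_of_dim_def by simp
  obtain q where q: "q \<in> C" "infdist (xs ! j) ?H \<le> \<alpha> * infdist q ?H"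
    by (rule approx_coreset_farther_point[OF coreset \<open>finite P\<close> \<open>0 < \<alpha>\<close> xs(3) H far])
  have "(infdist (xs ! j) ?H)\<^sup>2 \<le> (\<alpha> * infdist q ?H)\<^sup>2"
    using q(2) infdist_nonneg by (rule power_mono)
  then have sq: "(infdist (xs ! j) ?H)\<^sup>2 \<le> \<alpha>\<^sup>2 * (infdist q ?H)\<^sup>2"
    by (simp add: power_mult_distrib)
  have "det (gram_mat xs) = (infdist (xs ! j) ?H)\<^sup>2 * det (gram_mat ?ys)"
    using base_times_height[of "xs ! j"] by simp
  also have "\<dots> \<le> (\<alpha>\<^sup>2 * (infdist q ?H)\<^sup>2) * det (gram_mat ?ys)"
    using sq det_gram_mat_nonneg by (rule mult_right_mono)
  also have "\<dots> = \<alpha>\<^sup>2 * det (gram_mat (xs[j := q]))"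
    by (simp add: base_times_height)
  finally have "det (gram_mat xs) \<le> \<alpha>\<^sup>2 * det (gram_mat (xs[j := q]))" .
  with q(1) show ?thesis
    by (rule that)
qed

lemma exchange_into_subset:
  fixes f :: "'a list \<Rightarrow> real"
  assumes "V \<subseteq> U" "0 \<le> \<beta>"
    and exchange: "\<And>zs j. set zs \<subseteq> U \<Longrightarrow> length zs = k \<Longrightarrow> j < k \<Longrightarrow>
      0 < f zs \<Longrightarrow> \<exists>q\<in>V. f zs \<le> \<beta> * f (zs[j := q])"
    and xs: "set xs \<subseteq> U" "length xs = k" "0 < f xs"
  obtains zs where "set zs \<subseteq> V" "length zs = k" "0 < f zs" "f xs \<le> \<beta> ^ k * f zs"
proof -
  have "\<exists>zs. set zs \<subseteq> U \<and> length zs = k \<and> (\<forall>i<n. zs ! i \<in> V) \<and>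
      0 < f zs \<and> f xs \<le> \<beta> ^ n * f zs"
    if "n \<le> k" for n
    using that
  proof (induction n)
    case 0
    with xs show ?case by auto
  next
    case (Suc n)
    then obtain zs where zs: "set zs \<subseteq> U" "length zs = k" "\<forall>i<n. zs ! i \<in> V"
      and pos: "0 < f zs" and le: "f xs \<le> \<beta> ^ n * f zs"
      by auto
    have "n < k"
      using Suc.prems by simp
    then obtain q where q: "q \<in> V" and step: "f zs \<le> \<beta> * f (zs[n := q])"
      using exchange[OF zs(1,2) _ pos] by blast
    have "set (zs[n := q]) \<subseteq> U"
      using zs(1) q \<open>V \<subseteq> U\<close> set_update_subset_insert by fastforce
    moreover have "\<forall>i<Suc n. zs[n := q] ! i \<in> V"
      using zs(2,3) q Suc.prems by (auto simp: nth_list_update less_Suc_eq)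
    moreover have "0 < \<beta> * f (zs[n := q])"
      using pos step by linarith
    then have "0 < f (zs[n := q])"
      using \<open>0 \<le> \<beta>\<close> by (simp add: zero_less_mult_iff)
    moreover have "f xs \<le> \<beta> ^ Suc n * f (zs[n := q])"
    proof -
      have "\<beta> ^ n * f zs \<le> \<beta> ^ n * (\<beta> * f (zs[n := q]))"
        using step \<open>0 \<le> \<beta>\<close> by (simp add: mult_left_mono)
      with le show ?thesis
        by (simp add: ac_simps)
    qed
    ultimately show ?case
      using zs(2) by auto
  qed
  from this[OF order.refl] obtain zs where zs: "length zs = k" "\<forall>i<k. zs ! i \<in> V"
    and "0 < f zs" "f xs \<le> \<beta> ^ k * f zs"
    by blast
  moreover have "set zs \<subseteq> V"
    using zs by (auto simp: in_set_conv_nth)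
  ultimately show ?thesis
    using that by blast
qed

lemma maxdet_le_by_exchange:
  fixes U V :: "'a::euclidean_space set"
  assumes "finite U" "V \<subseteq> U" "0 \<le> \<beta>"
    and exchange: "\<And>zs j. set zs \<subseteq> U \<Longrightarrow> length zs = k \<Longrightarrow> j < k \<Longrightarrow>
      0 < det (gram_mat zs) \<Longrightarrow> \<exists>q\<in>V. det (gram_mat zs) \<le> \<beta> * det (gram_mat (zs[j := q]))"
  shows "maxdet k U \<le> \<beta> ^ k * maxdet k V"
proof -
  have "finite V"
    using assms(1,2) by (rule finite_subset[rotated])
  show ?thesis
  proof (cases "maxdet k U = 0")
    case True
    have "0 \<le> \<beta> ^ k * maxdet k V"
      using \<open>0 \<le> \<beta>\<close> maxdet_nonneg[OF \<open>finite V\<close>] by simp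
    with True show ?thesis
      by simp
  next
    case False
    then obtain xs where "distinct xs" and xs: "set xs \<subseteq> U" "length xs = k" "maxdet k U = det (gram_mat xs)"
      by (rule maxdet_attained[OF \<open>finite U\<close>])
    with False have "0 < det (gram_mat xs)"
      using det_gram_mat_nonneg[of xs] by simp
    then obtain zs where zs: "set zs \<subseteq> V" "length zs = k" "0 < det (gram_mat zs)"
      and le: "det (gram_mat xs) \<le> \<beta> ^ k * det (gram_mat zs)"
      using exchange_into_subset[OF \<open>V \<subseteq> U\<close> \<open>0 \<le> \<beta>\<close> exchange xs(1,2)] by blast
    have "distinct zs"
      using det_gram_mat_nonzero_imp_distinct_independent[of zs] zs(3) by auto
    then have "det (gram_mat zs) \<le> maxdet k V"
      by (rule maxdet_ge[OF \<open>finite V\<close> _ zs(1,2)])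
    then have "\<beta> ^ k * det (gram_mat zs) \<le> \<beta> ^ k * maxdet k V"
      using \<open>0 \<le> \<beta>\<close> by (simp add: mult_left_mono)
    with le xs(3) show ?thesis
      by simp
  qed
qed

lemma det_gram_mat_exchange_UN:
  fixes P c :: "'i \<Rightarrow> 'a::euclidean_space set"
  assumes "\<And>i. i \<in> I \<Longrightarrow> finite (P i)"
    and "\<And>i. i \<in> I \<Longrightarrow> approx_coreset \<alpha> k (c i) (P i)"
    and "0 < \<alpha>"
    and zs: "set zs \<subseteq> (\<Union>i\<in>I. P i)" "length zs = k" "j < k" "0 < det (gram_mat zs)"
  shows "\<exists>q\<in>(\<Union>i\<in>I. c i). det (gram_mat zs) \<le> \<alpha>\<^sup>2 * det (gram_mat (zs[j := q]))"
proof -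
  have "zs ! j \<in> set zs"
    using zs(2,3) by simp
  then obtain i where i: "i \<in> I" "zs ! j \<in> P i"
    using zs(1) by blast
  obtain q where "q \<in> c i" "det (gram_mat zs) \<le> \<alpha>\<^sup>2 * det (gram_mat (zs[j := q]))"
    by (rule det_gram_mat_exchange[OF assms(2,1)[OF i(1)] \<open>0 < \<alpha>\<close> zs(2,3) i(2) zs(4)])
  with i(1) show ?thesis
    by blast
qed

theorem lemma3p3:
  fixes P c :: "nat \<Rightarrow> 'a::euclidean_space set"
    and k m :: nat and \<alpha> :: real
  assumes "1 \<le> k" and "k \<le> DIM('a)" and "\<alpha> \<ge> 1"
    and "\<And>i. i \<in> {1..m} \<Longrightarrow> finite (P i)"
    and "\<And>i. i \<in> {1..m} \<Longrightarrow> approx_coreset \<alpha> k (c i) (P i)"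
  shows "maxdet k (\<Union>i\<in>{1..m}. P i) \<le> \<alpha> ^ (2 * k) * maxdet k (\<Union>i\<in>{1..m}. c i)"
proof -
  have "0 < \<alpha>"
    using assms(3) by simp
  have "finite (\<Union>i\<in>{1..m}. P i)"
    using assms(4) by blast
  moreover have "(\<Union>i\<in>{1..m}. c i) \<subseteq> (\<Union>i\<in>{1..m}. P i)"
    using assms(5) by (fastforce simp: approx_coreset_def)
  moreover have "0 \<le> \<alpha>\<^sup>2"
    by simp
  moreover have "\<exists>q\<in>(\<Union>i\<in>{1..m}. c i). det (gram_mat zs) \<le> \<alpha>\<^sup>2 * det (gram_mat (zs[j := q]))"
    if "set zs \<subseteq> (\<Union>i\<in>{1..m}. P i)" "length zs = k" "j < k" "0 < det (gram_mat zs)" for zs j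
    using assms(4,5) \<open>0 < \<alpha>\<close> that by (rule det_gram_mat_exchange_UN)
  ultimately have "maxdet k (\<Union>i\<in>{1..m}. P i) \<le> (\<alpha>\<^sup>2) ^ k * maxdet k (\<Union>i\<in>{1..m}. c i)"
    by (rule maxdet_le_by_exchange)
  then show ?thesis
    by (simp add: power_mult)
qed

end
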